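(* Let $\mathcal Q,\mathcal R$ be polynomials in three complex variables. Then $$\mathcal Q(\Lambda^3,\Lambda^7_{1,1},M^8)+\Lambda^5_1\,\mathcal R(\Lambda^3,\Lambda^7_{1,1},M^8)\Big|_{f_1'=0}\equiv0$$ holds identically in $\mathbb C[f_2',f_1'',f_2'',f_1''',f_2''',f_1'''',f_2'''']$ if and only if $\mathcal Q$ and $\mathcal R$ are both identically zero.
   Context: $f_i^{(\lambda)}$ ($i\in\{1,2\}$, $\lambda\ge1$) are independent indeterminates; $\Delta^{\alpha,\beta}:=f_1^{(\alpha)}f_2^{(\beta)}-f_1^{(\beta)}f_2^{(\alpha)}$. $\Lambda^3:=\Delta^{1,2}$; $\Lambda^5_1:=\Delta^{1,3}f_1'-3\Delta^{1,2}f_1''$; $\Lambda^7_{1,1}:=(\Delta^{1,4}+4\Delta^{2,3})(f_1')^2-10\Delta^{1,3}f_1'f_1''+15\Delta^{1,2}(f_1'')^2$; $M^8:=3\Delta^{1,4}\Delta^{1,2}+12\Delta^{2,3}\Delta^{1,2}-5(\Delta^{1,3})^2$. "$|_{f_1'=0}$" means substituting $f_1'=0$. *)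

theory Defs
  imports "HOL-Computational_Algebra.Polynomial" Complex_Main
begin

text \<open>Polynomials in three complex variables x, y, z are represented as nested
univariate polynomials: complex poly poly poly = C[x][y][z].\<close>

definition eval3 :: "complex poly poly poly \<Rightarrow> complex \<Rightarrow> complex \<Rightarrow> complex \<Rightarrow> complex" where
  "eval3 P x y z = poly (map_poly (\<lambda>q. poly (map_poly (\<lambda>p. poly p x) q) y) P) z"

text \<open>f1 k, f2 k stand for the indeterminates f_1^(k), f_2^(k).\<close>

definition Delta :: "(nat \<Rightarrow> complex) \<Rightarrow> (nat \<Rightarrow> complex) \<Rightarrow> nat \<Rightarrow> nat \<Rightarrow> complex" where
  "Delta f1 f2 a b = f1 a * f2 b - f1 b * f2 a"

definition Lam3 :: "(nat \<Rightarrow> complex) \<Rightarrow> (nat \<Rightarrow> complex) \<Rightarrow> complex" where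
  "Lam3 f1 f2 = Delta f1 f2 1 2"

definition Lam5 :: "(nat \<Rightarrow> complex) \<Rightarrow> (nat \<Rightarrow> complex) \<Rightarrow> complex" where
  "Lam5 f1 f2 = Delta f1 f2 1 3 * f1 1 - 3 * Delta f1 f2 1 2 * f1 2"

definition Lam7 :: "(nat \<Rightarrow> complex) \<Rightarrow> (nat \<Rightarrow> complex) \<Rightarrow> complex" where
  "Lam7 f1 f2 = (Delta f1 f2 1 4 + 4 * Delta f1 f2 2 3) * (f1 1)^2
     - 10 * Delta f1 f2 1 3 * f1 1 * f1 2 + 15 * Delta f1 f2 1 2 * (f1 2)^2"

definition M8 :: "(nat \<Rightarrow> complex) \<Rightarrow> (nat \<Rightarrow> complex) \<Rightarrow> complex" where
  "M8 f1 f2 = 3 * Delta f1 f2 1 4 * Delta f1 f2 1 2 + 12 * Delta f1 f2 2 3 * Delta f1 f2 1 2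
     - 5 * (Delta f1 f2 1 3)^2"

end

theory Submission
  imports Defs
begin

text \<open>
  For the converse we
  exhibit, on the locus f_1' = 0, explicit jets f_1, f_2 depending on parameters
  x, s, z (with x, s nonzero) at which
    Lambda^3 = x,  Lambda^7_{1,1} = 15 x s^2,  M^8 = z,  Lambda^5_1 = -3 x s.
  Since s and -s give the same values of the first three invariants but opposite
  values of Lambda^5_1, the hypothesis forces Q(x,y,z) = R(x,y,z) = 0 for all
  x, y nonzero and all z (take s a square root of y/(15x)).  A polynomial in
  three variables vanishing on this Zariski-dense set is zero.
\<close>

lemma poly_eq_0_if_vanishes_cofinite:
  fixes p :: "'a :: {idom, ring_char_0} poly"
  assumes "finite A" and "\<And>x. x \<notin> A \<Longrightarrow> poly p x = 0"
  shows "p = 0"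
proof (rule ccontr)
  assume "p \<noteq> 0"
  then have "finite {x. poly p x = 0}" by (rule poly_roots_finite)
  then have "finite ({x. poly p x = 0} \<union> A)" using assms(1) by simp
  moreover have "UNIV \<subseteq> {x. poly p x = 0} \<union> A" using assms(2) by auto
  ultimately have "finite (UNIV :: 'a set)" by (rule finite_subset[rotated])
  then show False using infinite_UNIV_char_0 by blast
qed

lemma coeff_map_poly_eval:
  "coeff (map_poly (\<lambda>p. poly p x) P) n = poly (coeff P n) x"
  by (simp add: coeff_map_poly)

lemma poly2_eq_0_if_vanishes_cofinite:
  fixes P :: "'a :: {idom, ring_char_0} poly poly"
  assumes "finite A" "finite B"
    and "\<And>x y. x \<notin> A \<Longrightarrow> y \<notin> B \<Longrightarrow> poly (map_poly (\<lambda>p. poly p x) P) y = 0"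
  shows "P = 0"
proof -
  have specialised_0: "map_poly (\<lambda>p. poly p x) P = 0" if "x \<notin> A" for x
    using assms(2) by (rule poly_eq_0_if_vanishes_cofinite) (use assms(3) that in auto)
  have "poly (coeff P n) x = 0" if "x \<notin> A" for x n
    using arg_cong[OF specialised_0[OF that], of "\<lambda>r. coeff r n"]
    by (simp add: coeff_map_poly_eval)
  then have "coeff P n = 0" for n
    using assms(1) poly_eq_0_if_vanishes_cofinite by blast
  then show ?thesis by (simp add: poly_eq_iff)
qed

lemma eval3_eq_0_imp_zero:
  fixes P :: "complex poly poly poly"
  assumes "\<And>x y z. x \<noteq> 0 \<Longrightarrow> y \<noteq> 0 \<Longrightarrow> eval3 P x y z = 0"
  shows "P = 0"
proof -
  have specialised_0: "map_poly (\<lambda>q. poly (map_poly (\<lambda>p. poly p x) q) y) P = 0"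
    if "x \<noteq> 0" "y \<noteq> 0" for x y
    using assms that by (auto simp: eval3_def poly_all_0_iff_0[symmetric])
  have "poly (map_poly (\<lambda>p. poly p x) (coeff P n)) y = 0"
    if "x \<notin> {0}" "y \<notin> {0}" for x y n
    using arg_cong[OF specialised_0[of x y], of "\<lambda>r. coeff r n"] that
    by (simp add: coeff_map_poly coeff_map_poly_eval)
  then have "coeff P n = 0" for n
    by (intro poly2_eq_0_if_vanishes_cofinite[of "{0}" "{0}"]) auto
  then show ?thesis by (simp add: poly_eq_iff)
qed

text \<open>The test jets: for x, s nonzero, f_1 = (0, s, 0, 0, ...) and
  f_2 = (-x/s, 0, z/(12 s x), 0, ...) lie on the locus f_1' = 0, and there only
  Delta^{1,2} = x and Delta^{2,3} = z/(12x) are nonzero.\<close>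

lemma test_jet_exists:
  fixes s x z :: complex
  assumes "s \<noteq> 0" "x \<noteq> 0"
  shows "\<exists>f1 f2. f1 1 = 0 \<and> Lam3 f1 f2 = x \<and> Lam7 f1 f2 = 15*x*s^2 \<and>
                  M8 f1 f2 = z \<and> Lam5 f1 f2 = -3*x*s"
proof (intro exI conjI)
  let ?f1 = "\<lambda>k::nat. if k = 2 then s else 0"
  let ?f2 = "\<lambda>k::nat. if k = 1 then -x/s else if k = 3 then z/(12*s*x) else 0"
  show "?f1 1 = 0" by simp
  show "Lam3 ?f1 ?f2 = x" "Lam7 ?f1 ?f2 = 15*x*s^2" "M8 ?f1 ?f2 = z"
       "Lam5 ?f1 ?f2 = -3*x*s"
    using assms by (auto simp: Lam3_def Lam7_def M8_def Lam5_def Delta_def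
        field_simps power2_eq_square)
qed

lemma Q_R_vanish_off_axes:
  fixes Q R :: "complex poly poly poly"
  assumes H: "\<forall>f1 f2 :: nat \<Rightarrow> complex. f1 1 = 0 \<longrightarrow>
            eval3 Q (Lam3 f1 f2) (Lam7 f1 f2) (M8 f1 f2)
            + Lam5 f1 f2 * eval3 R (Lam3 f1 f2) (Lam7 f1 f2) (M8 f1 f2) = 0"
    and "x \<noteq> 0" "y \<noteq> 0"
  shows "eval3 Q x y z = 0 \<and> eval3 R x y z = 0"
proof -
  define s where "s = csqrt (y / (15*x))"
  have s_sq: "15*x*s^2 = y" using \<open>x \<noteq> 0\<close> by (simp add: s_def)
  then have "s \<noteq> 0" using \<open>y \<noteq> 0\<close> by auto
  have relation: "eval3 Q x y z + (-3*x*t) * eval3 R x y z = 0"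
    if "t \<noteq> 0" "t^2 = s^2" for t
  proof -
    obtain f1 f2 where "f1 1 = 0" "Lam3 f1 f2 = x" "Lam7 f1 f2 = y" "M8 f1 f2 = z"
        "Lam5 f1 f2 = -3*x*t"
      using test_jet_exists[OF \<open>t \<noteq> 0\<close> \<open>x \<noteq> 0\<close>, of z] s_sq \<open>t^2 = s^2\<close> by auto
    then show ?thesis using H by metis
  qed
  have plus: "eval3 Q x y z - 3*x*s * eval3 R x y z = 0"
    using relation[OF \<open>s \<noteq> 0\<close>] by simp
  have minus: "eval3 Q x y z + 3*x*s * eval3 R x y z = 0"
    using relation[of "-s"] \<open>s \<noteq> 0\<close> by simp
  from plus minus have "(6*x*s) * eval3 R x y z = 0" by algebra
  then have "eval3 R x y z = 0" using \<open>s \<noteq> 0\<close> \<open>x \<noteq> 0\<close> by simp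
  then show ?thesis using plus by simp
qed

theorem mainTheorem10:
  fixes Q R :: "complex poly poly poly"
  shows "(\<forall>f1 f2 :: nat \<Rightarrow> complex. f1 1 = 0 \<longrightarrow>
            eval3 Q (Lam3 f1 f2) (Lam7 f1 f2) (M8 f1 f2)
            + Lam5 f1 f2 * eval3 R (Lam3 f1 f2) (Lam7 f1 f2) (M8 f1 f2) = 0)
         \<longleftrightarrow> (Q = 0 \<and> R = 0)"
proof
  assume H: "\<forall>f1 f2 :: nat \<Rightarrow> complex. f1 1 = 0 \<longrightarrow>
            eval3 Q (Lam3 f1 f2) (Lam7 f1 f2) (M8 f1 f2)
            + Lam5 f1 f2 * eval3 R (Lam3 f1 f2) (Lam7 f1 f2) (M8 f1 f2) = 0"
  show "Q = 0 \<and> R = 0"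
    using eval3_eq_0_imp_zero[of Q] eval3_eq_0_imp_zero[of R]
      Q_R_vanish_off_axes[OF H] by blast
next
  assume "Q = 0 \<and> R = 0"
  then show "\<forall>f1 f2 :: nat \<Rightarrow> complex. f1 1 = 0 \<longrightarrow>
            eval3 Q (Lam3 f1 f2) (Lam7 f1 f2) (M8 f1 f2)
            + Lam5 f1 f2 * eval3 R (Lam3 f1 f2) (Lam7 f1 f2) (M8 f1 f2) = 0"
    by (simp add: eval3_def)
qed

end
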